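(* Let $\vec{\mathcal U}_1,\vec{\mathcal U}_2,\vec{\mathcal V}_1,\vec{\mathcal V}_2\in\Upsilon$. If $\preceq_{\vec{\mathcal U}_1}=\preceq_{\vec{\mathcal U}_2}$ and $\preceq_{\vec{\mathcal V}_1}=\preceq_{\vec{\mathcal V}_2}$, then $\preceq_{\vec{\mathcal U}_1*\vec{\mathcal V}_1}=\preceq_{\vec{\mathcal U}_2*\vec{\mathcal V}_2}$.
   Context: $L$ is a propositional language built from a finite set of propositional variables with the connectives $\neg,\wedge,\vee,\rightarrow,\top,\bot$; $W$ is the finite set of propositional worlds. For $\theta\in L$, $S_\theta=\{w\in W\mid w\models\theta\}$. Sequences: finite sequences $\vec{\mathcal U}=(\mathcal U_0,\ldots,\mathcal U_k)$ ($k\ge0$) of mutually disjoint subsets of $W$ (components may be empty, possibly repeatedly). $\mathrm{rank}^{\vec{\mathcal U}}(\theta)$ is the least $i$ with $\mathcal U_i\cap S_\theta\neq\emptyset$, and $\infty$ if none (with $i<\infty$ for every integer $i$). $\theta\mid\!\sim_{\vec{\mathcal U}}\phi$ iff either $\mathrm{rank}^{\vec{\mathcal U}}(\theta)<\mathrm{rank}^{\vec{\mathcal U}}(\theta\wedge\neg\phi)$ or $\mathrm{rank}^{\vec{\mathcal U}}(\theta)=\infty$. $\vec{\mathcal U}$ is full iff $\bigcup_i\mathcal U_i=W$, empty iff $\bigcup_i\mathcal U_i=\emptyset$; $\Upsilon$ is the set of such sequences which are full or empty. For $\vec{\mathcal U}\in\Upsilon$, $\theta\preceq_{\vec{\mathcal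 U}}\phi$ iff (not $\neg\theta\vee\neg\phi\mid\!\sim_{\vec{\mathcal U}}\theta$) or $\neg\phi\mid\!\sim_{\vec{\mathcal U}}\bot$. Sequence revision $*:\Upsilon\times\Upsilon\to\Upsilon$: for $\vec{\mathcal U}=(\mathcal U_0,\ldots,\mathcal U_k)$ and $\vec{\mathcal V}=(\mathcal V_0,\ldots,\mathcal V_m)$, if $\vec{\mathcal U}$ is full then $\vec{\mathcal U}*\vec{\mathcal V}=(\mathcal U_0\cap\mathcal V_0,\ldots,\mathcal U_k\cap\mathcal V_0,\ \mathcal U_0\cap\mathcal V_1,\ldots,\mathcal U_k\cap\mathcal V_1,\ \ldots,\ \mathcal U_0\cap\mathcal V_m,\ldots,\mathcal U_k\cap\mathcal V_m)$; otherwise $\vec{\mathcal U}*\vec{\mathcal V}=\vec{\mathcal V}$. *)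

theory Defs
  imports Main "HOL-Library.Extended_Nat"
begin

datatype 'v form =
    Var 'v | Neg "'v form" | Conj "'v form" "'v form" | Disj "'v form" "'v form"
  | Imp "'v form" "'v form" | Top | Bot

text \<open>A world is the set of variables true in it; W is the set of all worlds (UNIV).\<close>
type_synonym 'v world = "'v set"

fun sat :: "'v world \<Rightarrow> 'v form \<Rightarrow> bool" where
  "sat w (Var p) = (p \<in> w)"
| "sat w (Neg a) = (\<not> sat w a)"
| "sat w (Conj a b) = (sat w a \<and> sat w b)"
| "sat w (Disj a b) = (sat w a \<or> sat w b)"
| "sat w (Imp a b) = (sat w a \<longrightarrow> sat w b)"
| "sat w Top = True"
| "sat w Bot = False"

definition models_set :: "'v form \<Rightarrow> 'v world set" ("S") where
  "S \<theta> = {w. sat w \<theta>}"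

definition is_seq :: "'v world set list \<Rightarrow> bool" where
  "is_seq U \<longleftrightarrow> U \<noteq> [] \<and>
     (\<forall>i j. i < length U \<longrightarrow> j < length U \<longrightarrow> i \<noteq> j \<longrightarrow> U ! i \<inter> U ! j = {})"

definition seq_rank :: "'v world set list \<Rightarrow> 'v form \<Rightarrow> enat" where
  "seq_rank U \<theta> =
     (if \<exists>i < length U. U ! i \<inter> S \<theta> \<noteq> {}
      then enat (LEAST i. i < length U \<and> U ! i \<inter> S \<theta> \<noteq> {}) else \<infinity>)"

definition nm_inf :: "'v world set list \<Rightarrow> 'v form \<Rightarrow> 'v form \<Rightarrow> bool" where
  "nm_inf U \<theta> \<phi> \<longleftrightarrow>
     seq_rank U \<theta> < seq_rank U (Conj \<theta> (Neg \<phi>)) \<or> seq_rank U \<theta> = \<infinity>"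

definition full_seq :: "'v world set list \<Rightarrow> bool" where
  "full_seq U \<longleftrightarrow> \<Union>(set U) = UNIV"

definition empty_seq :: "'v world set list \<Rightarrow> bool" where
  "empty_seq U \<longleftrightarrow> \<Union>(set U) = {}"

definition Upsilon :: "'v world set list set" where
  "Upsilon = {U. is_seq U \<and> (full_seq U \<or> empty_seq U)}"

definition seq_pref :: "'v world set list \<Rightarrow> 'v form \<Rightarrow> 'v form \<Rightarrow> bool" where
  "seq_pref U \<theta> \<phi> \<longleftrightarrow>
     \<not> nm_inf U (Disj (Neg \<theta>) (Neg \<phi>)) \<theta> \<or> nm_inf U (Neg \<phi>) Bot"

text \<open>Sequence revision: if U is full, (U_0\<inter>V_0,...,U_k\<inter>V_0, ..., U_0\<inter>V_m,...,U_k\<inter>V_m); else V.\<close>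
definition seq_rev :: "'v world set list \<Rightarrow> 'v world set list \<Rightarrow> 'v world set list" where
  "seq_rev U V = (if full_seq U then concat (map (\<lambda>v. map (\<lambda>u. u \<inter> v) U) V) else V)"

end

theory Submission
  imports Defs
begin

text \<open>The rank of a set of worlds is the least rank of its members, and every set of worlds
is the extension of a formula. Hence the preference relation of a sequence in \<open>\<Upsilon>\<close> is
trivial if the sequence is empty, and otherwise determined by the total preorder in which the
sequence ranks single worlds; fullness itself can be read off the relation. For full
\<open>U\<close> and \<open>V\<close>, a world in \<open>U\<^sub>i\<close> and \<open>V\<^sub>j\<close> lies exactly in block
\<open>j * |U| + i\<close> of \<open>U * V\<close>, so \<open>U * V\<close> ranks worlds lexicographically by their
\<open>V\<close>-rank and then their \<open>U\<close>-rank, an order fixed by the world orders of \<open>U\<close> and \<open>V\<close>.\<close>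

lemma models_set_simps [simp]:
  "S (Var p) = {w. p \<in> w}" "S (Neg a) = - S a" "S (Conj a b) = S a \<inter> S b"
  "S (Disj a b) = S a \<union> S b" "S (Imp a b) = - S a \<union> S b" "S Top = UNIV" "S Bot = {}"
  by (auto simp: models_set_def)

lemma models_set_foldr_Conj: "S (foldr Conj \<phi>s Top) = (\<Inter>\<phi>\<in>set \<phi>s. S \<phi>)"
  by (induction \<phi>s) auto

lemma models_set_foldr_Disj: "S (foldr Disj \<phi>s Bot) = (\<Union>\<phi>\<in>set \<phi>s. S \<phi>)"
  by (induction \<phi>s) auto

lemma ex_models_set_eq:
  fixes A :: "('v::finite) world set"
  shows "\<exists>\<theta>. S \<theta> = A"
proof -
  obtain ps :: "'v list" where ps: "set ps = UNIV" using finite_list[OF finite] by blast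
  obtain ws where ws: "set ws = A" using finite_list[OF finite] by blast
  define literal :: "'v world \<Rightarrow> 'v \<Rightarrow> 'v form"
    where "literal w p = (if p \<in> w then Var p else Neg (Var p))" for w p
  define state where "state w = foldr Conj (map (literal w) ps) Top" for w
  have "S (literal w p) = {w'. p \<in> w' \<longleftrightarrow> p \<in> w}" for w p
    by (auto simp: literal_def)
  then have "w' \<in> S (state w) \<longleftrightarrow> (\<forall>p. p \<in> w' \<longleftrightarrow> p \<in> w)" for w w'
    by (simp add: state_def models_set_foldr_Conj ps)
  then have "S (state w) = {w}" for w
    by (simp add: set_eq_iff)
  then have "S (foldr Disj (map state ws) Bot) = A"
    by (simp add: models_set_foldr_Disj ws)
  then show ?thesis ..
qed

definition set_rank :: "'v world set list \<Rightarrow> 'v world set \<Rightarrow> enat" where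
  "set_rank U A = (INF i \<in> {i. i < length U \<and> U ! i \<inter> A \<noteq> {}}. enat i)"

lemma INF_enat_Collect_eq_LEAST:
  "(INF i \<in> {i. P i}. enat i) = (if \<exists>i. P i then enat (LEAST i. P i) else \<infinity>)"
proof (cases "\<exists>i. P i")
  case True
  have "(INF i \<in> {i. P i}. enat i) = enat (LEAST i. P i)"
  proof (rule antisym)
    show "(INF i \<in> {i. P i}. enat i) \<le> enat (LEAST i. P i)"
      by (rule INF_lower) (simp add: LeastI_ex[OF True])
    show "enat (LEAST i. P i) \<le> (INF i \<in> {i. P i}. enat i)"
      by (rule INF_greatest) (simp add: Least_le)
  qed
  with True show ?thesis by simp
qed (simp add: top_enat_def)

lemma seq_rank_eq_set_rank: "seq_rank U \<theta> = set_rank U (S \<theta>)"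
  by (simp add: seq_rank_def set_rank_def INF_enat_Collect_eq_LEAST)

lemma set_rank_eq_INF_singleton: "set_rank U A = (INF w \<in> A. set_rank U {w})"
proof (rule antisym)
  show "set_rank U A \<le> (INF w \<in> A. set_rank U {w})"
    unfolding set_rank_def by (rule INF_greatest, rule INF_superset_mono) auto
  show "(INF w \<in> A. set_rank U {w}) \<le> set_rank U A"
    unfolding set_rank_def[of U A]
  proof (rule INF_greatest)
    fix i assume "i \<in> {i. i < length U \<and> U ! i \<inter> A \<noteq> {}}"
    then obtain w where "w \<in> A" "i < length U" "w \<in> U ! i" by blast
    then show "(INF w \<in> A. set_rank U {w}) \<le> enat i"
      unfolding set_rank_def by (auto intro!: INF_lower2[of w] INF_lower)
  qed
qed

lemma set_rank_empty [simp]: "set_rank U {} = \<infinity>"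
  by (simp add: set_rank_eq_INF_singleton[of U "{}"] top_enat_def)

lemma set_rank_Un: "set_rank U (A \<union> B) = min (set_rank U A) (set_rank U B)"
  by (simp add: set_rank_eq_INF_singleton[of U "A \<union> B"] set_rank_eq_INF_singleton[of U A]
      set_rank_eq_INF_singleton[of U B] INF_union inf_min)

lemma seq_pref_iff_set_rank_le: "seq_pref U \<theta> \<phi> \<longleftrightarrow> set_rank U (- S \<theta>) \<le> set_rank U (- S \<phi>)"
proof -
  let ?a = "set_rank U (- S \<theta>)" and ?b = "set_rank U (- S \<phi>)"
  have disj: "nm_inf U (Disj (Neg \<theta>) (Neg \<phi>)) \<theta> \<longleftrightarrow> min ?a ?b < ?a \<or> min ?a ?b = \<infinity>"
    unfolding nm_inf_def seq_rank_eq_set_rank by (simp add: set_rank_Un)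
  have bot: "nm_inf U (Neg \<phi>) Bot \<longleftrightarrow> ?b = \<infinity>"
    unfolding nm_inf_def seq_rank_eq_set_rank by simp
  have "(\<not> (min a b < a \<or> min a b = \<infinity>) \<or> b = \<infinity>) \<longleftrightarrow> a \<le> b" for a b :: enat
    by (cases a; cases b) (auto simp: min_def)
  then show ?thesis
    unfolding seq_pref_def disj bot .
qed

lemma seq_pref_eq_iff_set_rank_le_iff:
  fixes U1 U2 :: "('v::finite) world set list"
  shows "seq_pref U1 = seq_pref U2 \<longleftrightarrow>
    (\<forall>A B. set_rank U1 A \<le> set_rank U1 B \<longleftrightarrow> set_rank U2 A \<le> set_rank U2 B)"
proof
  assume eq: "seq_pref U1 = seq_pref U2"
  show "\<forall>A B. set_rank U1 A \<le> set_rank U1 B \<longleftrightarrow> set_rank U2 A \<le> set_rank U2 B"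
  proof (intro allI)
    fix A B :: "'v world set"
    obtain \<theta> where "S \<theta> = - A" using ex_models_set_eq by blast
    moreover obtain \<phi> where "S \<phi> = - B" using ex_models_set_eq by blast
    ultimately
    show "set_rank U1 A \<le> set_rank U1 B \<longleftrightarrow> set_rank U2 A \<le> set_rank U2 B"
      using eq seq_pref_iff_set_rank_le[of U1 \<theta> \<phi>] seq_pref_iff_set_rank_le[of U2 \<theta> \<phi>] by simp
  qed
next
  assume "\<forall>A B. set_rank U1 A \<le> set_rank U1 B \<longleftrightarrow> set_rank U2 A \<le> set_rank U2 B"
  then show "seq_pref U1 = seq_pref U2"
    by (intro ext) (simp only: seq_pref_iff_set_rank_le)
qed

lemma set_rank_empty_seq: "empty_seq U \<Longrightarrow> set_rank U A = \<infinity>"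
  by (auto simp: set_rank_def empty_seq_def top_enat_def[symmetric] dest: nth_mem)

lemma seq_pref_empty_seq: "empty_seq U \<Longrightarrow> seq_pref U \<theta> \<phi>"
  by (simp add: seq_pref_iff_set_rank_le set_rank_empty_seq)

lemma full_seq_ex_index: "full_seq U \<Longrightarrow> \<exists>i < length U. w \<in> U ! i"
  unfolding full_seq_def by (metis UNIV_I UnionE in_set_conv_nth)

lemma full_seq_iff_not_seq_pref_Top_Bot: "U \<in> Upsilon \<Longrightarrow> full_seq U \<longleftrightarrow> \<not> seq_pref U Top Bot"
proof -
  assume U: "U \<in> Upsilon"
  have "full_seq U \<longleftrightarrow> set_rank U UNIV \<noteq> \<infinity>"
  proof
    assume "full_seq U"
    then obtain i where "i < length U" "undefined \<in> U ! i"
      using full_seq_ex_index by blast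
    then have "set_rank U UNIV \<le> enat i"
      unfolding set_rank_def by (auto intro: INF_lower)
    then show "set_rank U UNIV \<noteq> \<infinity>" by (auto dest: enat_ile)
  next
    assume "set_rank U UNIV \<noteq> \<infinity>"
    then show "full_seq U"
      using U set_rank_empty_seq[of U UNIV] by (auto simp: Upsilon_def)
  qed
  then show ?thesis
    by (simp add: seq_pref_iff_set_rank_le)
qed

definition world_rank :: "'v world set list \<Rightarrow> 'v world \<Rightarrow> nat" where
  "world_rank U w = (LEAST i. i < length U \<and> w \<in> U ! i)"

lemma world_rank_less_length: "full_seq U \<Longrightarrow> world_rank U w < length U"
  unfolding world_rank_def by (metis (mono_tags, lifting) LeastI_ex full_seq_ex_index)

lemma in_nth_world_rank: "full_seq U \<Longrightarrow> w \<in> U ! world_rank U w"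
  unfolding world_rank_def by (metis (mono_tags, lifting) LeastI_ex full_seq_ex_index)

lemma world_rank_eqI:
  assumes "is_seq U" "i < length U" "w \<in> U ! i"
  shows "world_rank U w = i"
  unfolding world_rank_def
proof (rule Least_equality)
  show "i < length U \<and> w \<in> U ! i" using assms(2,3) ..
  show "i \<le> j" if "j < length U \<and> w \<in> U ! j" for j
    using assms that unfolding is_seq_def by (metis disjoint_iff order_refl)
qed

lemma set_rank_singleton: "full_seq U \<Longrightarrow> set_rank U {w} = enat (world_rank U w)"
  by (simp add: set_rank_def INF_enat_Collect_eq_LEAST world_rank_def full_seq_ex_index)

lemma INF_le_INF_iff:
  fixes f :: "'a \<Rightarrow> 'b::complete_linorder"
  assumes "finite A" and not_top: "\<And>b. b \<in> B \<Longrightarrow> f b \<noteq> top"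
  shows "(INF a \<in> A. f a) \<le> (INF b \<in> B. f b) \<longleftrightarrow> (\<forall>b \<in> B. \<exists>a \<in> A. f a \<le> f b)"
proof
  assume le: "(INF a \<in> A. f a) \<le> (INF b \<in> B. f b)"
  show "\<forall>b \<in> B. \<exists>a \<in> A. f a \<le> f b"
  proof
    fix b assume "b \<in> B"
    then have "(INF a \<in> A. f a) \<le> f b"
      using le by (meson INF_lower order_trans)
    then have "A \<noteq> {}"
      using not_top[OF \<open>b \<in> B\<close>] by (auto simp: top_unique)
    then have "(INF a \<in> A. f a) \<in> f ` A"
      using Min_in[of "f ` A"] Min_Inf[of "f ` A"] \<open>finite A\<close> by simp
    then show "\<exists>a \<in> A. f a \<le> f b"
      using \<open>(INF a \<in> A. f a) \<le> f b\<close> by auto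
  qed
qed (use INF_mono[of B A f f] in blast)

lemma set_rank_le_set_rank_iff:
  fixes U :: "('v::finite) world set list"
  assumes "full_seq U"
  shows "set_rank U A \<le> set_rank U B \<longleftrightarrow> (\<forall>b \<in> B. \<exists>a \<in> A. world_rank U a \<le> world_rank U b)"
  using INF_le_INF_iff[of A B "\<lambda>w. enat (world_rank U w)"]
  by (simp add: set_rank_eq_INF_singleton[of U A] set_rank_eq_INF_singleton[of U B]
      set_rank_singleton[OF assms] top_enat_def)

lemma seq_pref_eq_iff_world_rank_le_iff:
  fixes U1 U2 :: "('v::finite) world set list"
  assumes "full_seq U1" "full_seq U2"
  shows "seq_pref U1 = seq_pref U2 \<longleftrightarrow>
    (\<forall>a b. world_rank U1 a \<le> world_rank U1 b \<longleftrightarrow> world_rank U2 a \<le> world_rank U2 b)"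
  unfolding seq_pref_eq_iff_set_rank_le_iff set_rank_le_set_rank_iff[OF assms(1)]
    set_rank_le_set_rank_iff[OF assms(2)]
proof
  assume H: "\<forall>A B. (\<forall>b\<in>B. \<exists>a\<in>A. world_rank U1 a \<le> world_rank U1 b) \<longleftrightarrow>
    (\<forall>b\<in>B. \<exists>a\<in>A. world_rank U2 a \<le> world_rank U2 b)"
  show "\<forall>a b. world_rank U1 a \<le> world_rank U1 b \<longleftrightarrow> world_rank U2 a \<le> world_rank U2 b"
  proof (intro allI)
    fix a b
    from H[rule_format, where A="{a}" and B="{b}"]
    show "world_rank U1 a \<le> world_rank U1 b \<longleftrightarrow> world_rank U2 a \<le> world_rank U2 b" by simp
  qed
qed simp

lemma seq_rev_full_seq:
  "full_seq U \<Longrightarrow> seq_rev U V = map (\<lambda>(v, u). u \<inter> v) (List.product V U)"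
  unfolding seq_rev_def by (induction V) auto

lemma length_seq_rev: "full_seq U \<Longrightarrow> length (seq_rev U V) = length V * length U"
  by (simp add: seq_rev_full_seq)

lemma nth_seq_rev:
  assumes "full_seq U" "m < length V * length U"
  shows "seq_rev U V ! m = U ! (m mod length U) \<inter> V ! (m div length U)"
  using assms by (simp add: seq_rev_full_seq product_nth)

lemma mult_add_less_mult:
  fixes i j j' n :: nat
  assumes "i < n" "j < j'"
  shows "j * n + i < j' * n"
proof -
  have "j * n + i < Suc j * n" using assms(1) by simp
  also have "\<dots> \<le> j' * n" using assms(2) by (intro mult_le_mono1) simp
  finally show ?thesis .
qed

lemma mult_add_le_mult_add_iff:
  fixes i i' j j' n :: nat
  assumes "i < n" "i' < n"
  shows "j * n + i \<le> j' * n + i' \<longleftrightarrow> j < j' \<or> j = j' \<and> i \<le> i'"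
  using mult_add_less_mult[OF assms(1), of j j'] mult_add_less_mult[OF assms(2), of j' j]
  by (cases j j' rule: linorder_cases) auto

lemma seq_rev_nth_mult_add:
  assumes "full_seq U" "i < length U" "j < length V"
  shows "j * length U + i < length (seq_rev U V)"
    and "seq_rev U V ! (j * length U + i) = U ! i \<inter> V ! j"
proof -
  show lt: "j * length U + i < length (seq_rev U V)"
    using mult_add_less_mult[OF assms(2), of j "length V"] assms(3)
    by (simp add: length_seq_rev[OF assms(1)])
  have "length U \<noteq> 0" using assms(2) by linarith
  then have "(j * length U + i) div length U = j" "(j * length U + i) mod length U = i"
    using assms(2) by simp_all
  then show "seq_rev U V ! (j * length U + i) = U ! i \<inter> V ! j"
    using lt assms(1) by (simp add: length_seq_rev nth_seq_rev)
qed

lemma full_seq_seq_rev: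
  assumes "full_seq U" "full_seq V"
  shows "full_seq (seq_rev U V)"
  unfolding full_seq_def
proof (intro set_eqI iffI)
  fix w :: "'a world"
  let ?m = "world_rank V w * length U + world_rank U w"
  have "w \<in> seq_rev U V ! ?m"
    using seq_rev_nth_mult_add(2) assms world_rank_less_length in_nth_world_rank by (metis IntI)
  then show "w \<in> \<Union> (set (seq_rev U V))"
    using seq_rev_nth_mult_add(1) assms world_rank_less_length nth_mem by (metis UnionI)
qed simp

lemma empty_seq_seq_rev: "empty_seq V \<Longrightarrow> empty_seq (seq_rev U V)"
  by (auto simp: seq_rev_def empty_seq_def)

lemma is_seq_seq_rev:
  assumes U: "is_seq U" and V: "is_seq V"
  shows "is_seq (seq_rev U V)"
proof (cases "full_seq U")
  case full: True
  let ?n = "length U"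
  have "seq_rev U V ! m \<inter> seq_rev U V ! m' = {}"
    if "m < length V * ?n" "m' < length V * ?n" "m \<noteq> m'" for m m'
  proof (cases "m mod ?n = m' mod ?n")
    case True
    then have "m div ?n \<noteq> m' div ?n"
      using that(3) by (metis div_mult_mod_eq)
    moreover have "m div ?n < length V" "m' div ?n < length V"
      using that(1,2) by (simp_all add: less_mult_imp_div_less)
    ultimately have "V ! (m div ?n) \<inter> V ! (m' div ?n) = {}"
      using V by (simp add: is_seq_def)
    then show ?thesis using that(1,2) full by (auto simp: nth_seq_rev)
  next
    case False
    moreover have "?n > 0" using U by (simp add: is_seq_def)
    ultimately have "U ! (m mod ?n) \<inter> U ! (m' mod ?n) = {}"
      using U by (simp add: is_seq_def)
    then show ?thesis using that(1,2) full by (auto simp: nth_seq_rev)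
  qed
  moreover have "seq_rev U V \<noteq> []"
    using U V full by (simp add: is_seq_def length_seq_rev flip: length_greater_0_conv)
  ultimately show ?thesis
    using full by (simp add: is_seq_def length_seq_rev)
qed (simp add: seq_rev_def V)

lemma world_rank_seq_rev:
  assumes "is_seq U" "is_seq V" "full_seq U" "full_seq V"
  shows "world_rank (seq_rev U V) w = world_rank V w * length U + world_rank U w"
  using assms
  by (intro world_rank_eqI is_seq_seq_rev seq_rev_nth_mult_add)
    (simp_all add: seq_rev_nth_mult_add world_rank_less_length in_nth_world_rank)

lemma world_rank_seq_rev_le_iff:
  assumes "is_seq U" "is_seq V" "full_seq U" "full_seq V"
  shows "world_rank (seq_rev U V) a \<le> world_rank (seq_rev U V) b \<longleftrightarrow>
    world_rank V a < world_rank V b \<or>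
    world_rank V a = world_rank V b \<and> world_rank U a \<le> world_rank U b"
  by (simp add: world_rank_seq_rev[OF assms] mult_add_le_mult_add_iff world_rank_less_length assms)

lemma seq_pref_seq_rev_cong_full:
  fixes U1 U2 V1 V2 :: "('v::finite) world set list"
  assumes seqs: "is_seq U1" "is_seq U2" "is_seq V1" "is_seq V2"
    and fulls: "full_seq U1" "full_seq U2" "full_seq V1" "full_seq V2"
    and "seq_pref U1 = seq_pref U2" "seq_pref V1 = seq_pref V2"
  shows "seq_pref (seq_rev U1 V1) = seq_pref (seq_rev U2 V2)"
proof -
  have "world_rank U1 a \<le> world_rank U1 b \<longleftrightarrow> world_rank U2 a \<le> world_rank U2 b"
    and "world_rank V1 a \<le> world_rank V1 b \<longleftrightarrow> world_rank V2 a \<le> world_rank V2 b" for a b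
    using assms(9,10) fulls seq_pref_eq_iff_world_rank_le_iff by blast+
  then have "world_rank (seq_rev U1 V1) a \<le> world_rank (seq_rev U1 V1) b \<longleftrightarrow>
    world_rank (seq_rev U2 V2) a \<le> world_rank (seq_rev U2 V2) b" for a b
    unfolding world_rank_seq_rev_le_iff[OF seqs(1,3) fulls(1,3)]
      world_rank_seq_rev_le_iff[OF seqs(2,4) fulls(2,4)]
    by (metis le_antisym not_le)
  then show ?thesis
    using seq_pref_eq_iff_world_rank_le_iff full_seq_seq_rev fulls by blast
qed

theorem proposition5:
  fixes U1 U2 V1 V2 :: "('v::finite) world set list"
  assumes "U1 \<in> Upsilon" and "U2 \<in> Upsilon" and "V1 \<in> Upsilon" and "V2 \<in> Upsilon"
    and "seq_pref U1 = seq_pref U2" and "seq_pref V1 = seq_pref V2"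
  shows "seq_pref (seq_rev U1 V1) = seq_pref (seq_rev U2 V2)"
proof -
  have full_U: "full_seq U1 \<longleftrightarrow> full_seq U2" and full_V: "full_seq V1 \<longleftrightarrow> full_seq V2"
    using assms full_seq_iff_not_seq_pref_Top_Bot by metis+
  consider "\<not> full_seq U1" | "full_seq U1" "\<not> full_seq V1" | "full_seq U1" "full_seq V1"
    by blast
  then show ?thesis
  proof cases
    case 1
    then show ?thesis using full_U assms(6) by (simp add: seq_rev_def)
  next
    case 2
    then have "empty_seq V1" "empty_seq V2"
      using full_V assms(3,4) by (auto simp: Upsilon_def)
    then show ?thesis by (simp add: fun_eq_iff seq_pref_empty_seq empty_seq_seq_rev)
  next
    case 3
    then show ?thesis
      using assms full_U full_V by (intro seq_pref_seq_rev_cong_full) (simp_all add: Upsilon_def)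
  qed
qed

end
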